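(* Let $V$ be an $n$-dimensional vector space over a field of characteristic zero, $n\neq 4$, and let $A^{ab}$ and $B_{ab}$ be 2-forms with $\operatorname{rank}A\leq 4$. Let $T=T^a{}_b\{A,B\}=A^{ac}B_{bc}-\frac14 A^{cd}B_{cd}\delta^a_b$. Then $$\Bigl(T^2-\frac14[T^2]+\frac{1}{4(n-4)}[T]^2\Bigr)\Bigl(T-\frac{1}{n-4}[T]\Bigr)=0.$$
   Context: Index-free notation for $(1,1)$-tensors: products denote composition, $[X]=X^c{}_c$ is the trace, and a scalar term is understood as multiplied by the identity $\delta^a_b$. The rank of a 2-form $A^{ab}$ is the dimension of the subspace spanned by the vectors $A^{ab}\omega_b$ as $\omega$ ranges over the dual space (equivalently the least number of linearly independent vectors needed to construct $A$). No metric is assumed. *)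

theory Defs
  imports "HOL-Analysis.Analysis"
begin

text \<open>Matrices over a field represent tensors in a basis of V (dim V = CARD('n)).
  A 2-form A^{ab} (contravariant) and B_{ab} (covariant) are antisymmetric matrices.\<close>

definition skew :: "'a::field^'n^'n \<Rightarrow> bool" where
  "skew A \<longleftrightarrow> transpose A = - A"

definition form_rank :: "'a::field^'n^'n \<Rightarrow> nat" where
  "form_rank A = vec.dim (range (\<lambda>w. A *v w))"

definition Tmat :: "'a::field^'n^'n \<Rightarrow> 'a^'n^'n \<Rightarrow> 'a^'n^'n" where
  "Tmat A B = A ** transpose B - mat (trace (A ** transpose B) / 4)"

end

theory Submission
  imports Defs
begin

(* Put M = A B^T, so that T = M - [M]/4. Once T is expressed through M the factor n - 4
   cancels, and the claimed cubic in T becomes q(M) M with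
   q(N) = N^2 - ([N]/2) N + [N]^2/8 - [N^2]/4.
   Since rank A <= 4, A = E R E^T with R a skew 4 x 4 matrix; then M = E K with K E = R C,
   C = E^T B^T E again skew 4 x 4, and q(M) M = E q(R C) K. Finally q(R C) = 0 for any two
   skew 4 x 4 matrices R and C, by direct expansion. *)

lemma matrix_add_rdistrib: "((X :: 'a::semiring_1^'k^'m) + Y) ** Z = X ** Z + Y ** Z"
  by (simp add: vec_eq_iff matrix_matrix_mult_def algebra_simps sum.distrib)

lemma matrix_diff_rdistrib: "((X :: 'a::ring_1^'k^'m) - Y) ** Z = X ** Z - Y ** Z"
  by (simp add: vec_eq_iff matrix_matrix_mult_def algebra_simps sum_subtractf)

lemma matrix_diff_ldistrib: "(X :: 'a::ring_1^'k^'m) ** (Y - Z) = X ** Y - X ** Z"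
  by (simp add: vec_eq_iff matrix_matrix_mult_def algebra_simps sum_subtractf)

lemma matrix_neg_left: "(- X :: 'a::ring_1^'k^'m) ** Y = - (X ** Y)"
  by (simp add: vec_eq_iff matrix_matrix_mult_def sum_negf)

lemma matrix_neg_right: "(X :: 'a::ring_1^'k^'m) ** (- Y) = - (X ** Y)"
  by (simp add: vec_eq_iff matrix_matrix_mult_def sum_negf)

lemma transpose_neg: "transpose (- X :: 'a::ring_1^'k^'m) = - transpose X"
  by (simp add: vec_eq_iff transpose_def)

lemma mat_matrix_mult: "mat a ** (X :: 'a::semiring_1^'k^'m) = (\<chi> i j. a * X $ i $ j)"
  by (simp add: vec_eq_iff matrix_matrix_mult_def mat_def if_distrib if_distribR sum.delta
      cong: if_cong)

lemma matrix_mult_mat_commute: "(X :: 'a::comm_semiring_1^'k^'m) ** mat a = mat a ** X"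
  by (simp add: vec_eq_iff matrix_matrix_mult_def mat_def mat_matrix_mult if_distrib if_distribR
      sum.delta' mult.commute cong: if_cong)

lemma mat_mult_mat: "mat a ** mat b = (mat (a * b) :: 'a::semiring_1^'n^'n)"
  unfolding mat_matrix_mult by (simp add: vec_eq_iff mat_def)

lemma trace_mat: "trace (mat a :: 'a::semiring_1^'n^'n) = of_nat CARD('n) * a"
  unfolding trace_def mat_def by simp

lemma trace_mat_matrix_mult: "trace (mat a ** (X :: 'a::semiring_1^'n^'n)) = a * trace X"
  by (simp add: mat_matrix_mult trace_def sum_distrib_left)

lemma matrix_vector_mult_axis: "(A :: 'a::semiring_1^'k^'m) *v axis j 1 = column j A"
  by (simp add: vec_eq_iff matrix_vector_mult_def column_def axis_def if_distrib cong: if_cong)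

lemma skew_entry: "skew R \<Longrightarrow> R $ j $ i = - R $ i $ j"
  unfolding skew_def by (drule arg_cong[where f = "\<lambda>X. X $ i $ j"]) (simp add: transpose_def)

lemma skew_diag: "skew (R :: 'a::field_char_0^'n^'n) \<Longrightarrow> R $ i $ i = 0"
  using skew_entry[of R i i] by simp

lemma skew_transpose: "skew R \<Longrightarrow> skew (transpose R)"
  by (simp add: skew_def transpose_neg)

lemma skew_congruence:
  fixes P :: "'a::field^'n^'k"
  shows "skew R \<Longrightarrow> skew (P ** R ** transpose P)"
  by (simp add: skew_def matrix_transpose_mul matrix_neg_left matrix_neg_right matrix_mul_assoc)

lemma column_space_retraction:
  fixes A :: "'a::field^'m^'n"
  assumes "vec.dim (range (\<lambda>w. A *v w)) \<le> CARD('k)"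
  obtains E :: "'a^'k^'n" and P :: "'a^'n^'k" where "E ** P ** A = A"
proof -
  obtain Bs where Bs: "vec.independent Bs" "range (\<lambda>w. A *v w) \<subseteq> vec.span Bs"
      "card Bs = vec.dim (range (\<lambda>w. A *v w))"
    using vec.basis_exists by blast
  have "finite Bs" using Bs(1) vec.finiteI_independent by blast
  then obtain g :: "'a^'n \<Rightarrow> 'k" where g: "inj_on g Bs"
    using card_le_inj[of Bs "UNIV :: 'k set"] Bs(3) assms by auto
  obtain Q :: "'a^'n \<Rightarrow> 'a^'k" where Q: "Vector_Spaces.linear (*s) (*s) Q"
      "\<And>b. b \<in> Bs \<Longrightarrow> Q b = axis (g b) 1"
    using vec.linear_independent_extend[OF Bs(1), of "\<lambda>b. axis (g b) 1"] by blast
  \<comment> \<open>P sends a basis vector b of the column space to the unit vector at g b; E sends it back.\<close>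
  define E :: "'a^'k^'n" where "E = (\<chi> i j. if j \<in> g ` Bs then inv_into Bs g j $ i else 0)"
  define P where "P = matrix Q"
  have "(E ** P) *v b = b" if "b \<in> Bs" for b
  proof -
    have "(E ** P) *v b = E *v axis (g b) 1"
      by (simp add: P_def matrix_works[OF Q(1)] matrix_vector_mul_assoc[symmetric] Q(2) that)
    also have "\<dots> = b"
      using that g by (simp add: matrix_vector_mult_axis column_def E_def vec_eq_iff)
    finally show ?thesis .
  qed
  then have EP: "(E ** P) *v y = y" if "y \<in> vec.span Bs" for y
    using vec.linear_eq_on[OF matrix_vector_mul_linear_gen vec.linear_id that] by simp
  have "E ** P ** A = A"
    by (rule matrix_eq[THEN iffD2])
      (use Bs(2) EP in \<open>auto simp: matrix_vector_mul_assoc[symmetric]\<close>)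
  then show thesis by (rule that)
qed

lemma skew_factor_through_rank:
  fixes A :: "'a::field^'n^'n"
  assumes "skew A" and "form_rank A \<le> CARD('k)"
  obtains E :: "'a^'k^'n" and R :: "'a^'k^'k" where "A = E ** R ** transpose E" and "skew R"
proof -
  obtain E :: "'a^'k^'n" and P where EPA: "E ** P ** A = A"
    using assms(2) unfolding form_rank_def by (rule column_space_retraction)
  have "- A ** transpose P ** transpose E = - A"
    using arg_cong[OF EPA, of transpose] assms(1)
    by (simp only: skew_def matrix_transpose_mul matrix_mul_assoc)
  then have "A ** transpose P ** transpose E = A"
    by (simp add: matrix_neg_left)
  then have "A = E ** (P ** A ** transpose P) ** transpose E"
    using EPA by (simp add: matrix_mul_assoc)
  then show thesis
    using skew_congruence[OF assms(1)] by (rule that)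
qed

(* The eigenvalues of a product of two skew 4 x 4 matrices come in pairs a, a, b, b;
   pair_quadratic N is then (N - a)(N - b), with ab = [N]^2/8 - [N^2]/4. *)
definition pair_quadratic :: "'a::field^'n^'n \<Rightarrow> 'a^'n^'n" where
  "pair_quadratic N =
     N ** N - mat (trace N / 2) ** N + mat (trace N ^ 2 / 8 - trace (N ** N) / 4)"

lemma skew4_mult_pair_quadratic:
  fixes R C :: "'a::field_char_0^4^4"
  assumes "skew R" and "skew C"
  shows "pair_quadratic (R ** C) = 0"
proof -
  have entries: "X$2$1 = - X$1$2" "X$3$1 = - X$1$3" "X$4$1 = - X$1$4"
    "X$3$2 = - X$2$3" "X$4$2 = - X$2$4" "X$4$3 = - X$3$4"
    "X$1$1 = 0" "X$2$2 = 0" "X$3$3 = 0" "X$4$4 = 0" if "skew X" for X :: "'a^4^4"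
    by (rule skew_entry[OF that] skew_diag[OF that])+
  show ?thesis
    unfolding pair_quadratic_def mat_matrix_mult
    apply (simp add: vec_eq_iff forall_4 matrix_matrix_mult_def sum_4 mat_def trace_def
        entries[OF assms(1)] entries[OF assms(2)])
    apply (intro conjI; algebra)
    done
qed

lemma pair_quadratic_mult_factor:
  fixes E :: "'a::field^'k^'n" and K :: "'a^'n^'k"
  shows "pair_quadratic (E ** K) ** (E ** K) = E ** pair_quadratic (K ** E) ** K"
proof -
  have trace_swap: "trace (E ** K) = trace (K ** E)"
    by (rule trace_mul_sym)
  have trace_sq_swap: "trace (E ** K ** (E ** K)) = trace (K ** E ** (K ** E))"
    using trace_mul_sym[of E "K ** (E ** K)"] by (simp add: matrix_mul_assoc)
  show ?thesis
    unfolding pair_quadratic_def trace_swap trace_sq_swap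
    by (simp add: matrix_add_rdistrib matrix_diff_rdistrib matrix_add_ldistrib
        matrix_diff_ldistrib matrix_mul_assoc matrix_mult_mat_commute)
qed

lemma shifted_cubic_eq_pair_quadratic_mult:
  fixes M :: "'a::field_char_0^'n^'n"
  assumes "CARD('n) \<noteq> 4"
  defines "n \<equiv> of_nat CARD('n) :: 'a" and "T \<equiv> M - mat (trace M / 4)"
  shows "(T ** T - mat (trace (T ** T) / 4) + mat (trace T ^ 2 / (4 * (n - 4))))
      ** (T - mat (trace T / (n - 4))) = pair_quadratic M ** M"
proof -
  define t where "t = trace M"
  have "n \<noteq> 4"
    using assms(1) unfolding n_def by (metis of_nat_eq_iff of_nat_numeral)
  then have n4: "n - 4 \<noteq> 0" by simp
  have trace_T: "trace T = - t * (n - 4) / 4"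
    unfolding T_def t_def n_def by (simp add: trace_sub trace_mat algebra_simps)
  then have "trace T / (n - 4) = - (t / 4)"
    using n4 by (simp add: field_simps)
  then have linear_factor: "T - mat (trace T / (n - 4)) = M"
    unfolding T_def t_def by (simp add: vec_eq_iff mat_def)
  have T_sq: "T ** T = M ** M - mat (t / 2) ** M + mat (t ^ 2 / 16)"
    unfolding T_def t_def matrix_diff_ldistrib matrix_diff_rdistrib mat_mult_mat
    unfolding matrix_mult_mat_commute
    unfolding mat_matrix_mult
    by (simp add: vec_eq_iff mat_def algebra_simps power2_eq_square)
  have trace_T_sq: "trace (T ** T) = trace (M ** M) - t ^ 2 / 2 + n * t ^ 2 / 16"
    unfolding T_sq n_def
    by (simp add: trace_sub trace_add trace_mat_matrix_mult trace_mat power2_eq_square t_def)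
  have coeff: "t ^ 2 / 16 - trace (T ** T) / 4 + trace T ^ 2 / (4 * (n - 4))
      = t ^ 2 / 8 - trace (M ** M) / 4"
    using n4 unfolding trace_T_sq trace_T by (simp add: field_simps power2_eq_square)
  have shifted_square:
    "T ** T - mat a + mat b = M ** M - mat (t / 2) ** M + mat (t ^ 2 / 16 - a + b)" for a b
    unfolding T_sq by (simp add: vec_eq_iff mat_def algebra_simps)
  have quadratic_factor: "T ** T - mat (trace (T ** T) / 4) + mat (trace T ^ 2 / (4 * (n - 4)))
      = pair_quadratic M"
    using shifted_square[of "trace (T ** T) / 4" "trace T ^ 2 / (4 * (n - 4))"]
    unfolding coeff pair_quadratic_def t_def[symmetric] .
  show ?thesis
    unfolding linear_factor quadratic_factor ..
qed

theorem theorem5: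
  fixes A B :: "'a::field_char_0^'n^'n"
  assumes "CARD('n) \<noteq> 4"
    and "skew A" and "skew B"
    and "form_rank A \<le> 4"
  shows "(let T = Tmat A B; n = (of_nat CARD('n) :: 'a) in
          (T ** T - mat (trace (T ** T) / 4) + mat (trace T ^ 2 / (4 * (n - 4))))
          ** (T - mat (trace T / (n - 4))) = 0)"
proof -
  have "form_rank A \<le> CARD(4)"
    using assms(4) by simp
  with assms(2) obtain E :: "'a^4^'n" and R where A: "A = E ** R ** transpose E" and "skew R"
    by (rule skew_factor_through_rank)
  define K where "K = R ** transpose E ** transpose B"
  define C where "C = transpose E ** transpose B ** transpose (transpose E)"
  have "skew C"
    unfolding C_def using assms(3) by (intro skew_congruence skew_transpose)
  have "A ** transpose B = E ** K"
    unfolding A K_def by (simp add: matrix_mul_assoc)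
  moreover have "K ** E = R ** C"
    unfolding K_def C_def by (simp add: matrix_mul_assoc)
  ultimately have "pair_quadratic (A ** transpose B) ** (A ** transpose B)
      = E ** pair_quadratic (R ** C) ** K"
    by (simp add: pair_quadratic_mult_factor)
  also have "\<dots> = 0"
    using \<open>skew R\<close> \<open>skew C\<close> by (simp add: skew4_mult_pair_quadratic)
  finally show ?thesis
    unfolding Tmat_def Let_def shifted_cubic_eq_pair_quadratic_mult[OF assms(1)] .
qed

end
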